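(* Let $S$ be a semiring and $\Sigma$ an alphabet. Then $\mathrm{Rev}(S,\Sigma)$ consists of precisely all finite sums of series from $\mathrm{Rev}_1(S,\Sigma)$; that is, a series $r \in S\langle\langle\Sigma^*\rangle\rangle$ belongs to $\mathrm{Rev}(S,\Sigma)$ if and only if $r = r_1 + \cdots + r_k$ for some $k \in \mathbb{N}$ (the empty sum being the zero series) and some $r_1,\ldots,r_k \in \mathrm{Rev}_1(S,\Sigma)$.
   Context: A semiring $(S,+,\cdot,0,1)$ has $(S,+,0)$ a commutative monoid, $(S,\cdot,1)$ a monoid, $\cdot$ distributing over $+$ on both sides and $0$ absorbing. A formal power series over $S$ and a finite nonempty alphabet $\Sigma$ is a map $r\colon \Sigma^*\to S$, written $(r,w)$ for its value at $w$; the set of these is $S\langle\langle\Sigma^*\rangle\rangle$, with pointwise addition. A weighted automaton over $S$ and $\Sigma$ is $\mathcal{A}=(Q,\sigma,\iota,\tau)$ with $Q$ a finite set, $\sigma\colon Q\times\Sigma\times Q\to S$, and $\iota,\tau\colon Q\to S$ (initial and final weights). A run on $w=a_1\cdots a_t$ is a sequence $q_0a_1q_1\cdots a_tq_t$ with $\sigma(q_{k-1},a_k,q_k)\neq 0$ for all $k$; its weight is $\iota(q_0)\sigma(q_0,a_1,q_1)\cdots\sigma(q_{t-1},a_t,q_t)\tau(q_t)$, and the series $\|\mathcal{A}\|$ realised by $\mathcal{A}$ has $(\|\mathcal{A}\|,w)$ equal to the sum of the weights of all runs on $w$. $\mathcal{A}$ is reversible if for all $p,p',q,q'\in Q$, $a\in\Sigma$: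 (i) if $\sigma(p,a,q)\neq0$ and $\sigma(p,a,q')\neq0$ then $q=q'$; (ii) if $\sigma(p,a,q)\neq0$ and $\sigma(p',a,q)\neq0$ then $p=p'$. $\mathrm{Rev}(S,\Sigma)$ denotes the set of series realised by reversible weighted automata over $S$ and $\Sigma$, and $\mathrm{Rev}_1(S,\Sigma)$ the set of series realised by reversible weighted automata over $S$ and $\Sigma$ having precisely one state $q$ with $\iota(q)\neq 0$. *)

theory Defs
  imports Main
begin

text \<open>Semiring: type class {semiring_0, monoid_mult} (commutative additive monoid,
 multiplicative monoid, two-sided distributivity, 0 absorbing; 0 = 1 allowed).
 Alphabet: a finite (hence nonempty) type 'b.
 Weighted automaton: a finite state set Q :: nat set together with
 sigma :: nat => 'b => nat => 'a, iota, tau :: nat => 'a (only values on Q matter).\<close>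

definition runs :: "nat set \<Rightarrow> (nat \<Rightarrow> 'b \<Rightarrow> nat \<Rightarrow> 'a::zero) \<Rightarrow> 'b list \<Rightarrow> nat list set" where
  "runs Q \<sigma> w = {qs. length qs = Suc (length w) \<and> set qs \<subseteq> Q \<and>
      (\<forall>k < length w. \<sigma> (qs ! k) (w ! k) (qs ! Suc k) \<noteq> 0)}"

definition run_weight ::
  "(nat \<Rightarrow> 'a::monoid_mult) \<Rightarrow> (nat \<Rightarrow> 'b \<Rightarrow> nat \<Rightarrow> 'a) \<Rightarrow> (nat \<Rightarrow> 'a) \<Rightarrow> 'b list \<Rightarrow> nat list \<Rightarrow> 'a" where
  "run_weight \<iota> \<sigma> \<tau> w qs =
     \<iota> (qs ! 0) * prod_list (map (\<lambda>k. \<sigma> (qs ! k) (w ! k) (qs ! Suc k)) [0..<length w])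
       * \<tau> (qs ! length w)"

definition behaviour ::
  "nat set \<Rightarrow> (nat \<Rightarrow> 'b \<Rightarrow> nat \<Rightarrow> 'a::{semiring_0,monoid_mult}) \<Rightarrow> (nat \<Rightarrow> 'a) \<Rightarrow> (nat \<Rightarrow> 'a)
     \<Rightarrow> 'b list \<Rightarrow> 'a" where
  "behaviour Q \<sigma> \<iota> \<tau> = (\<lambda>w. \<Sum>qs \<in> runs Q \<sigma> w. run_weight \<iota> \<sigma> \<tau> w qs)"

definition reversible :: "nat set \<Rightarrow> (nat \<Rightarrow> 'b \<Rightarrow> nat \<Rightarrow> 'a::zero) \<Rightarrow> bool" where
  "reversible Q \<sigma> \<longleftrightarrow>
     (\<forall>p\<in>Q. \<forall>q\<in>Q. \<forall>q'\<in>Q. \<forall>a. \<sigma> p a q \<noteq> 0 \<and> \<sigma> p a q' \<noteq> 0 \<longrightarrow> q = q') \<and>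
     (\<forall>p\<in>Q. \<forall>p'\<in>Q. \<forall>q\<in>Q. \<forall>a. \<sigma> p a q \<noteq> 0 \<and> \<sigma> p' a q \<noteq> 0 \<longrightarrow> p = p')"

definition Rev :: "('b::finite list \<Rightarrow> 'a::{semiring_0,monoid_mult}) set" where
  "Rev = {r. \<exists>Q \<sigma> \<iota> \<tau>. finite Q \<and> reversible Q \<sigma> \<and> r = behaviour Q \<sigma> \<iota> \<tau>}"

definition Rev1 :: "('b::finite list \<Rightarrow> 'a::{semiring_0,monoid_mult}) set" where
  "Rev1 = {r. \<exists>Q \<sigma> \<iota> \<tau>. finite Q \<and> reversible Q \<sigma> \<and> card {q\<in>Q. \<iota> q \<noteq> 0} = 1
              \<and> r = behaviour Q \<sigma> \<iota> \<tau>}"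

end

theory Submission
  imports Defs
begin

text \<open>A reversible automaton realises the sum of the automata obtained by keeping the initial
  weight of a single state only; these are still reversible, so every series in \<open>Rev\<close> is a
  finite sum of series in \<open>Rev\<^sub>1\<close>. Conversely, \<open>Rev\<close> is closed under sums: placing two reversible
  automata side by side on disjoint state sets (even and odd numbers) gives a reversible
  automaton whose runs are exactly the runs of the two components.\<close>

lemma finite_runs: "finite Q \<Longrightarrow> finite (runs Q \<sigma> w)"
  unfolding runs_def
  by (rule finite_subset[OF _ finite_lists_length_eq[of Q "Suc (length w)"]]) auto

lemma runs_nth_in: "qs \<in> runs Q \<sigma> w \<Longrightarrow> k \<le> length w \<Longrightarrow> qs ! k \<in> Q"
  by (auto simp: runs_def less_Suc_eq_le[symmetric] dest!: nth_mem)

lemma runs_hd_in: "qs \<in> runs Q \<sigma> w \<Longrightarrow> qs ! 0 \<in> Q"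
  using runs_nth_in by blast

lemma behaviour_in_Rev: "finite Q \<Longrightarrow> reversible Q \<sigma> \<Longrightarrow> behaviour Q \<sigma> \<iota> \<tau> \<in> Rev"
  unfolding Rev_def by blast

lemma behaviour_in_Rev1:
  "finite Q \<Longrightarrow> reversible Q \<sigma> \<Longrightarrow> card {q\<in>Q. \<iota> q \<noteq> 0} = 1 \<Longrightarrow> behaviour Q \<sigma> \<iota> \<tau> \<in> Rev1"
  unfolding Rev1_def by blast

lemma behaviour_empty: "behaviour {} \<sigma> \<iota> \<tau> = (\<lambda>w. 0)"
proof -
  have "runs {} \<sigma> w = {}" for w
    by (auto simp: runs_def)
  then show ?thesis by (simp add: behaviour_def)
qed

lemma runs_rename:
  assumes "inj_on h Q" and "\<And>p a q. p \<in> Q \<Longrightarrow> q \<in> Q \<Longrightarrow> \<sigma>' (h p) a (h q) = \<sigma> p a q"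
  shows "runs (h ` Q) \<sigma>' w = map h ` runs Q \<sigma> w"
proof
  show "map h ` runs Q \<sigma> w \<subseteq> runs (h ` Q) \<sigma>' w"
  proof
    fix qs assume "qs \<in> map h ` runs Q \<sigma> w"
    then obtain ps where ps: "ps \<in> runs Q \<sigma> w" and qs: "qs = map h ps"
      by blast
    have "\<sigma>' (qs ! k) (w ! k) (qs ! Suc k) = \<sigma> (ps ! k) (w ! k) (ps ! Suc k)" if "k < length w" for k
      using that runs_nth_in[OF ps] assms(2) ps by (simp add: qs runs_def)
    with ps show "qs \<in> runs (h ` Q) \<sigma>' w"
      by (auto simp: runs_def qs)
  qed
next
  show "runs (h ` Q) \<sigma>' w \<subseteq> map h ` runs Q \<sigma> w"
  proof
    fix qs assume qs: "qs \<in> runs (h ` Q) \<sigma>' w"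
    define ps where "ps = map (inv_into Q h) qs"
    have set_ps: "set ps \<subseteq> Q" and qs_ps: "qs = map h ps"
      using qs by (auto simp: runs_def ps_def inv_into_into f_inv_into_f intro!: map_idI[symmetric])
    have len: "length ps = Suc (length w)"
      using qs by (simp add: runs_def ps_def)
    have "\<sigma> (ps ! k) (w ! k) (ps ! Suc k) = \<sigma>' (qs ! k) (w ! k) (qs ! Suc k)" if "k < length w" for k
      using that len set_ps assms(2) by (simp add: qs_ps subset_iff)
    with qs set_ps len have "ps \<in> runs Q \<sigma> w"
      by (simp add: runs_def)
    then show "qs \<in> map h ` runs Q \<sigma> w"
      using qs_ps by blast
  qed
qed

lemma behaviour_rename:
  assumes "inj_on h Q"
    and "\<And>p a q. p \<in> Q \<Longrightarrow> q \<in> Q \<Longrightarrow> \<sigma>' (h p) a (h q) = \<sigma> p a q"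
    and "\<And>q. q \<in> Q \<Longrightarrow> \<iota>' (h q) = \<iota> q" and "\<And>q. q \<in> Q \<Longrightarrow> \<tau>' (h q) = \<tau> q"
  shows "behaviour (h ` Q) \<sigma>' \<iota>' \<tau>' = behaviour Q \<sigma> \<iota> \<tau>"
proof
  fix w
  have inj: "inj_on (map h) (runs Q \<sigma> w)"
  proof (rule inj_onI)
    fix xs ys assume "xs \<in> runs Q \<sigma> w" "ys \<in> runs Q \<sigma> w" "map h xs = map h ys"
    moreover from this have "inj_on h (set xs \<union> set ys)"
      using assms(1) by (auto simp: runs_def intro: inj_on_subset)
    ultimately show "xs = ys" by (simp add: inj_on_map_eq_map)
  qed
  have "run_weight \<iota>' \<sigma>' \<tau>' w (map h ps) = run_weight \<iota> \<sigma> \<tau> w ps" if ps: "ps \<in> runs Q \<sigma> w" for ps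
  proof -
    have "length ps = Suc (length w)"
      using ps by (simp add: runs_def)
    with assms(2-4) runs_nth_in[OF ps] show ?thesis
      unfolding run_weight_def by (auto intro!: arg_cong2[where f = "(*)"] arg_cong[where f = prod_list])
  qed
  then have "(\<Sum>ps \<in> runs Q \<sigma> w. run_weight \<iota>' \<sigma>' \<tau>' w (map h ps)) = behaviour Q \<sigma> \<iota> \<tau> w"
    by (simp add: behaviour_def)
  then show "behaviour (h ` Q) \<sigma>' \<iota>' \<tau>' w = behaviour Q \<sigma> \<iota> \<tau> w"
    by (simp add: behaviour_def runs_rename[where \<sigma>' = \<sigma>' and \<sigma> = \<sigma>, OF assms(1,2)] sum.reindex[OF inj])
qed

lemma reversible_rename:
  assumes "inj_on h Q" and "\<And>p a q. p \<in> Q \<Longrightarrow> q \<in> Q \<Longrightarrow> \<sigma>' (h p) a (h q) = \<sigma> p a q"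
    and "reversible Q \<sigma>"
  shows "reversible (h ` Q) \<sigma>'"
  using assms unfolding reversible_def by auto metis+

lemma run_stays_in:
  assumes qs: "qs \<in> runs Q \<sigma> w" and "qs ! 0 \<in> A"
    and closed: "\<And>p a q. p \<in> A \<Longrightarrow> q \<in> Q - A \<Longrightarrow> \<sigma> p a q = 0"
  shows "set qs \<subseteq> A"
proof -
  have "qs ! k \<in> A" if "k \<le> length w" for k
    using that
  proof (induction k)
    case 0
    then show ?case using \<open>qs ! 0 \<in> A\<close> by simp
  next
    case (Suc k)
    then have "\<sigma> (qs ! k) (w ! k) (qs ! Suc k) \<noteq> 0" "qs ! Suc k \<in> Q"
      using qs by (auto simp: runs_def)
    with Suc closed show ?case by fastforce
  qed
  then show ?thesis
    using qs by (auto simp: runs_def in_set_conv_nth less_Suc_eq_le)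
qed

lemma runs_Un:
  assumes no_cross: "\<And>p a q. p \<in> Q1 \<Longrightarrow> q \<in> Q2 \<Longrightarrow> \<sigma> p a q = 0 \<and> \<sigma> q a p = 0"
  shows "runs (Q1 \<union> Q2) \<sigma> w = runs Q1 \<sigma> w \<union> runs Q2 \<sigma> w"
proof
  show "runs (Q1 \<union> Q2) \<sigma> w \<subseteq> runs Q1 \<sigma> w \<union> runs Q2 \<sigma> w"
  proof
    fix qs assume qs: "qs \<in> runs (Q1 \<union> Q2) \<sigma> w"
    then have "set qs \<subseteq> Q1 \<or> set qs \<subseteq> Q2"
      using runs_hd_in[OF qs] run_stays_in[OF qs, of Q1] run_stays_in[OF qs, of Q2] no_cross
      by blast
    with qs show "qs \<in> runs Q1 \<sigma> w \<union> runs Q2 \<sigma> w"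
      by (auto simp: runs_def)
  qed
qed (auto simp: runs_def)

lemma behaviour_Un:
  assumes "finite Q1" "finite Q2" "Q1 \<inter> Q2 = {}"
    and "\<And>p a q. p \<in> Q1 \<Longrightarrow> q \<in> Q2 \<Longrightarrow> \<sigma> p a q = 0 \<and> \<sigma> q a p = 0"
  shows "behaviour (Q1 \<union> Q2) \<sigma> \<iota> \<tau> w = behaviour Q1 \<sigma> \<iota> \<tau> w + behaviour Q2 \<sigma> \<iota> \<tau> w"
proof -
  have disjoint: "runs Q1 \<sigma> w \<inter> runs Q2 \<sigma> w = {}"
    using assms(3) runs_hd_in by blast
  have "behaviour (Q1 \<union> Q2) \<sigma> \<iota> \<tau> w
      = (\<Sum>qs \<in> runs Q1 \<sigma> w \<union> runs Q2 \<sigma> w. run_weight \<iota> \<sigma> \<tau> w qs)"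
    by (simp add: behaviour_def runs_Un[OF assms(4)])
  also have "\<dots> = behaviour Q1 \<sigma> \<iota> \<tau> w + behaviour Q2 \<sigma> \<iota> \<tau> w"
    unfolding behaviour_def
    by (rule sum.union_disjoint[OF finite_runs[OF assms(1)] finite_runs[OF assms(2)] disjoint])
  finally show ?thesis .
qed

lemma reversible_forwardD:
  "reversible Q \<sigma> \<Longrightarrow> p \<in> Q \<Longrightarrow> q \<in> Q \<Longrightarrow> q' \<in> Q \<Longrightarrow> \<sigma> p a q \<noteq> 0 \<Longrightarrow> \<sigma> p a q' \<noteq> 0 \<Longrightarrow> q = q'"
  unfolding reversible_def by blast

lemma reversible_backwardD:
  "reversible Q \<sigma> \<Longrightarrow> p \<in> Q \<Longrightarrow> p' \<in> Q \<Longrightarrow> q \<in> Q \<Longrightarrow> \<sigma> p a q \<noteq> 0 \<Longrightarrow> \<sigma> p' a q \<noteq> 0 \<Longrightarrow> p = p'"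
  unfolding reversible_def by blast

lemma reversible_Un:
  assumes "reversible Q1 \<sigma>" "reversible Q2 \<sigma>"
    and no_cross: "\<And>p a q. p \<in> Q1 \<Longrightarrow> q \<in> Q2 \<Longrightarrow> \<sigma> p a q = 0 \<and> \<sigma> q a p = 0"
  shows "reversible (Q1 \<union> Q2) \<sigma>"
  unfolding reversible_def
proof (intro conjI ballI allI impI)
  fix p q q' a assume "p \<in> Q1 \<union> Q2" "q \<in> Q1 \<union> Q2" "q' \<in> Q1 \<union> Q2"
    and nz: "\<sigma> p a q \<noteq> 0 \<and> \<sigma> p a q' \<noteq> 0"
  then consider "p \<in> Q1" "q \<in> Q1" "q' \<in> Q1" | "p \<in> Q2" "q \<in> Q2" "q' \<in> Q2"
    using no_cross by (metis Un_iff)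
  then show "q = q'"
    by cases (use nz reversible_forwardD[OF assms(1)] reversible_forwardD[OF assms(2)] in blast)+
next
  fix p p' q a assume "p \<in> Q1 \<union> Q2" "p' \<in> Q1 \<union> Q2" "q \<in> Q1 \<union> Q2"
    and nz: "\<sigma> p a q \<noteq> 0 \<and> \<sigma> p' a q \<noteq> 0"
  then consider "p \<in> Q1" "p' \<in> Q1" "q \<in> Q1" | "p \<in> Q2" "p' \<in> Q2" "q \<in> Q2"
    using no_cross by (metis Un_iff)
  then show "p = p'"
    by cases (use nz reversible_backwardD[OF assms(1)] reversible_backwardD[OF assms(2)] in blast)+
qed

lemma behaviour_sum_initial:
  "behaviour Q \<sigma> (\<lambda>q. \<Sum>i\<in>A. \<iota> i q) \<tau> w = (\<Sum>i\<in>A. behaviour Q \<sigma> (\<iota> i) \<tau> w)"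
  unfolding behaviour_def run_weight_def by (simp add: sum_distrib_right sum.swap[of _ A])

lemma behaviour_cong_initial:
  assumes "\<And>q. q \<in> Q \<Longrightarrow> \<iota> q = \<iota>' q"
  shows "behaviour Q \<sigma> \<iota> \<tau> = behaviour Q \<sigma> \<iota>' \<tau>"
  unfolding behaviour_def run_weight_def using assms runs_hd_in by (metis (no_types, lifting) sum.cong)

lemma behaviour_split_initial:
  assumes "finite Q"
  shows "behaviour Q \<sigma> \<iota> \<tau> w
    = (\<Sum>p\<in>{q\<in>Q. \<iota> q \<noteq> 0}. behaviour Q \<sigma> (\<lambda>q. if q = p then \<iota> p else 0) \<tau> w)"
proof -
  have "\<iota> q = (\<Sum>p\<in>{q\<in>Q. \<iota> q \<noteq> 0}. if q = p then \<iota> p else 0)" if "q \<in> Q" for q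
    using assms that by simp
  then have "behaviour Q \<sigma> \<iota> \<tau>
      = behaviour Q \<sigma> (\<lambda>q. \<Sum>p\<in>{q\<in>Q. \<iota> q \<noteq> 0}. if q = p then \<iota> p else 0) \<tau>"
    by (rule behaviour_cong_initial)
  then show ?thesis by (simp add: behaviour_sum_initial)
qed

lemma Rev_imp_sum_Rev1:
  assumes "r \<in> Rev"
  shows "\<exists>(k::nat) rs. (\<forall>i<k. rs i \<in> Rev1) \<and> r = (\<lambda>w. \<Sum>i<k. rs i w)"
proof -
  obtain Q \<sigma> \<iota> \<tau> where Q: "finite Q" "reversible Q \<sigma>" and r: "r = behaviour Q \<sigma> \<iota> \<tau>"
    using assms unfolding Rev_def by blast
  define I where "I = {q\<in>Q. \<iota> q \<noteq> 0}"
  define rs_at where "rs_at p = behaviour Q \<sigma> (\<lambda>q. if q = p then \<iota> p else 0) \<tau>" for p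
  obtain f where f: "bij_betw f {..<card I} I"
    using ex_bij_betw_nat_finite[of I] Q(1) by (auto simp: I_def atLeast0LessThan)
  have "rs_at p \<in> Rev1" if "p \<in> I" for p
  proof -
    have "{q\<in>Q. (if q = p then \<iota> p else 0) \<noteq> 0} = {p}"
      using that by (auto simp: I_def)
    then have "card {q\<in>Q. (if q = p then \<iota> p else 0) \<noteq> 0} = 1" by simp
    with Q show ?thesis unfolding rs_at_def by (rule behaviour_in_Rev1)
  qed
  then have "\<forall>i<card I. rs_at (f i) \<in> Rev1"
    using f by (auto simp: bij_betw_def)
  moreover have "r w = (\<Sum>i<card I. rs_at (f i) w)" for w
  proof -
    have "r w = (\<Sum>p\<in>I. rs_at p w)"
      unfolding r rs_at_def I_def by (rule behaviour_split_initial[OF Q(1)])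
    also have "\<dots> = (\<Sum>i<card I. rs_at (f i) w)"
      by (rule sum.reindex_bij_betw[OF f, symmetric])
    finally show ?thesis .
  qed
  ultimately show ?thesis by (intro exI conjI) auto
qed

lemma Rev_add:
  assumes "r1 \<in> Rev" "r2 \<in> Rev"
  shows "(\<lambda>w. r1 w + r2 w) \<in> Rev"
proof -
  obtain Q1 \<sigma>1 \<iota>1 \<tau>1 where Q1: "finite Q1" "reversible Q1 \<sigma>1" and r1: "r1 = behaviour Q1 \<sigma>1 \<iota>1 \<tau>1"
    using assms(1) unfolding Rev_def by blast
  obtain Q2 \<sigma>2 \<iota>2 \<tau>2 where Q2: "finite Q2" "reversible Q2 \<sigma>2" and r2: "r2 = behaviour Q2 \<sigma>2 \<iota>2 \<tau>2"
    using assms(2) unfolding Rev_def by blast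
  define even_copy :: "nat \<Rightarrow> nat" where "even_copy q = 2 * q" for q
  define odd_copy :: "nat \<Rightarrow> nat" where "odd_copy q = Suc (2 * q)" for q
  define \<sigma> where "\<sigma> p a q =
    (if even p \<and> even q then \<sigma>1 (p div 2) a (q div 2)
     else if odd p \<and> odd q then \<sigma>2 (p div 2) a (q div 2) else 0)" for p a q
  define \<iota> where "\<iota> q = (if even q then \<iota>1 (q div 2) else \<iota>2 (q div 2))" for q
  define \<tau> where "\<tau> q = (if even q then \<tau>1 (q div 2) else \<tau>2 (q div 2))" for q
  have inj: "inj_on even_copy Q1" "inj_on odd_copy Q2"
    by (simp_all add: inj_on_def even_copy_def odd_copy_def)
  have \<sigma>_even: "\<sigma> (even_copy p) a (even_copy q) = \<sigma>1 p a q"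
    and \<sigma>_odd: "\<sigma> (odd_copy p) a (odd_copy q) = \<sigma>2 p a q" for p a q
    by (simp_all add: \<sigma>_def even_copy_def odd_copy_def)
  have no_cross: "\<sigma> p a q = 0 \<and> \<sigma> q a p = 0" if "p \<in> even_copy ` Q1" "q \<in> odd_copy ` Q2" for p a q
    using that by (auto simp: \<sigma>_def even_copy_def odd_copy_def)
  have disjoint: "even_copy ` Q1 \<inter> odd_copy ` Q2 = {}"
    by (auto simp: even_copy_def odd_copy_def) presburger
  have "behaviour (even_copy ` Q1) \<sigma> \<iota> \<tau> = r1"
    unfolding r1 by (rule behaviour_rename) (simp_all add: inj \<sigma>_def \<iota>_def \<tau>_def even_copy_def)
  moreover have "behaviour (odd_copy ` Q2) \<sigma> \<iota> \<tau> = r2"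
    unfolding r2 by (rule behaviour_rename) (simp_all add: inj \<sigma>_def \<iota>_def \<tau>_def odd_copy_def)
  ultimately have "(\<lambda>w. r1 w + r2 w) = behaviour (even_copy ` Q1 \<union> odd_copy ` Q2) \<sigma> \<iota> \<tau>"
    using behaviour_Un[of "even_copy ` Q1" "odd_copy ` Q2" \<sigma>, OF _ _ disjoint no_cross] Q1(1) Q2(1)
    by auto
  moreover have "reversible (even_copy ` Q1 \<union> odd_copy ` Q2) \<sigma>"
    using reversible_rename[OF inj(1) \<sigma>_even Q1(2)] reversible_rename[OF inj(2) \<sigma>_odd Q2(2)]
    by (rule reversible_Un) (rule no_cross)
  ultimately show ?thesis
    using Q1(1) Q2(1) by (simp add: behaviour_in_Rev)
qed

lemma Rev_zero: "(\<lambda>w. 0) \<in> Rev"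
  using behaviour_in_Rev[of "{}"] by (simp add: behaviour_empty reversible_def)

lemma Rev_sum: "(\<And>i. i \<in> A \<Longrightarrow> rs i \<in> Rev) \<Longrightarrow> (\<lambda>w. \<Sum>i\<in>A. rs i w) \<in> Rev"
proof (induction A rule: infinite_finite_induct)
  case (insert i A)
  then show ?case using Rev_add[of "rs i" "\<lambda>w. \<Sum>i\<in>A. rs i w"] by simp
qed (simp_all add: Rev_zero)

lemma Rev1_subset_Rev: "Rev1 \<subseteq> Rev"
  unfolding Rev1_def Rev_def by blast

theorem proposition1:
  fixes r :: "'b::finite list \<Rightarrow> 'a::{semiring_0,monoid_mult}"
  shows "r \<in> Rev \<longleftrightarrow>
    (\<exists>(k::nat) (rs :: nat \<Rightarrow> 'b list \<Rightarrow> 'a). (\<forall>i<k. rs i \<in> Rev1) \<and> r = (\<lambda>w. \<Sum>i<k. rs i w))"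
proof
  assume "r \<in> Rev"
  then show "\<exists>(k::nat) rs. (\<forall>i<k. rs i \<in> Rev1) \<and> r = (\<lambda>w. \<Sum>i<k. rs i w)"
    by (rule Rev_imp_sum_Rev1)
next
  assume "\<exists>(k::nat) rs. (\<forall>i<k. rs i \<in> Rev1) \<and> r = (\<lambda>w. \<Sum>i<k. rs i w)"
  then obtain k :: nat and rs where "\<forall>i<k. rs i \<in> Rev1" and r: "r = (\<lambda>w. \<Sum>i<k. rs i w)"
    by blast
  then show "r \<in> Rev"
    using Rev_sum[of "{..<k}" rs] Rev1_subset_Rev by auto
qed

end
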